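(* Let $\mathbf U$ be a real $3\times3$ positive-definite symmetric matrix and $\hat{\mathbf e}$ a unit vector such that $\hat{\mathbf U}:=(-\mathbf I+2\hat{\mathbf e}\otimes\hat{\mathbf e})\mathbf U(-\mathbf I+2\hat{\mathbf e}\otimes\hat{\mathbf e})\neq\mathbf U$ and $\hat{\mathbf e}$ is, up to sign, the only unit vector with this property. Let $$\mathbf n_{II}=2\Big(\hat{\mathbf e}-\frac{\mathbf U^2\hat{\mathbf e}}{|\mathbf U\hat{\mathbf e}|^2}\Big),\qquad \mathbf a_{II}=\mathbf U\hat{\mathbf e},$$ and let $\hat{\mathbf R}\in\mathrm{SO}(3)$ satisfy $\hat{\mathbf R}\hat{\mathbf U}=\mathbf U+\mathbf a_{II}\otimes\mathbf n_{II}$, with $\mathbf n_{II}\neq0$. Suppose the cofactor conditions hold with $\mathbf a=\mathbf a_{II}$, $\mathbf n=\mathbf n_{II}$: (CC1) the middle eigenvalue of $\mathbf U$ is $1$; (CC2) $\mathbf a_{II}\cdot\mathbf U\,\mathrm{cof}(\mathbf U^2-\mathbf I)\mathbf n_{II}=0$; (CC3) $\mathrm{tr}\,\mathbf U^2-\det\mathbf U^2-\frac{|\mathbf a_{II}|^2|\mathbf n_{II}|^2}{4}-2\ge0$. For $f\in\{0,1\}$ let $(\mathbf R_f^\kappa,\mathbf b_f^\kappa\otimes\mathbf m_f^\kappa)$, $\kappa\in\{\pm1\}$, be the two distinct solutions $\mathbf R\in\mathrm{SO}(3)$, $\mathbf b,\mathbf m\in\mathbb R^3$ of $\mathbf R(\mathbf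 U+f\,\mathbf a_{II}\otimes\mathbf n_{II})=\mathbf I+\mathbf b\otimes\mathbf m$. Then there are $\sigma,\sigma_*\in\{\pm1\}$ such that $\mathbf R_1^{\sigma_*}=\mathbf R_0^\sigma$ and $\mathbf m_1^{\sigma_*}=\xi\,\mathbf m_0^\sigma$ for some $\xi\neq0$, so that $$\mathbf R_0^\sigma\mathbf U=\mathbf I+\mathbf b_0^\sigma\otimes\mathbf m_0^\sigma,\qquad \mathbf R_0^\sigma(\mathbf U+\mathbf a_{II}\otimes\mathbf n_{II})=\mathbf I+\xi\mathbf b_1^{\sigma_*}\otimes\mathbf m_0^\sigma,$$ and consequently, for all $0\le f\le1$, $$\mathbf R_0^\sigma[\mathbf U+f\,\mathbf a_{II}\otimes\mathbf n_{II}]=\mathbf I+\big(f\xi\mathbf b_1^{\sigma_*}+(1-f)\mathbf b_0^\sigma\big)\otimes\mathbf m_0^\sigma.$$ In particular the normal $\mathbf m_0^\sigma$ is independent of $f$, and $\mathbf n_{II}=c\,\mathbf m_0^\sigma$ for some $c\neq0$.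
   Context: $\mathbf a\otimes\mathbf n$ is the matrix $\mathbf x\mapsto(\mathbf n\cdot\mathbf x)\mathbf a$; $\mathrm{cof}\,\mathbf A$ is the cofactor matrix of $\mathbf A$. Under the stated hypotheses, for $f\in\{0,1\}$ the equation $\mathbf R(\mathbf U+f\,\mathbf a_{II}\otimes\mathbf n_{II})=\mathbf I+\mathbf b\otimes\mathbf m$ has exactly two distinct solutions $(\mathbf R,\mathbf b\otimes\mathbf m)$, labeled by $\kappa=\pm1$. *)

theory Defs
  imports "HOL-Analysis.Analysis"
begin

definition tens :: "real^3 \<Rightarrow> real^3 \<Rightarrow> real^3^3" where
  "tens a n = (\<chi> i j. a $ i * n $ j)"

text \<open>Cofactor matrix of a 3x3 matrix (cyclic index formula, valid also for singular matrices).\<close>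
definition cof :: "real^3^3 \<Rightarrow> real^3^3" where
  "cof A = (\<chi> i j. A $ (i+1) $ (j+1) * A $ (i+2) $ (j+2) - A $ (i+1) $ (j+2) * A $ (i+2) $ (j+1))"

definition SO3 :: "(real^3^3) set" where
  "SO3 = {R. orthogonal_matrix R \<and> det R = 1}"

definition sym_pos_def :: "real^3^3 \<Rightarrow> bool" where
  "sym_pos_def U \<longleftrightarrow> transpose U = U \<and> (\<forall>x. x \<noteq> 0 \<longrightarrow> x \<bullet> (U *v x) > 0)"

definition ordered_eigenvalues :: "real^3^3 \<Rightarrow> real \<Rightarrow> real \<Rightarrow> real \<Rightarrow> bool" where
  "ordered_eigenvalues A l1 l2 l3 \<longleftrightarrow> l1 \<le> l2 \<and> l2 \<le> l3 \<and>
     (\<forall>t. det (mat t - A) = (t - l1) * (t - l2) * (t - l3))"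

definition middle_eigenvalue :: "real^3^3 \<Rightarrow> real" where
  "middle_eigenvalue A = (THE l2. \<exists>l1 l3. ordered_eigenvalues A l1 l2 l3)"

definition rot180 :: "real^3 \<Rightarrow> real^3^3" where
  "rot180 e = - mat 1 + 2 *\<^sub>R tens e e"

end

theory Submission
  imports Defs "HOL-Analysis.Cross3"
begin

(*
  Since R U = I + b \<otimes> m for a rotation R, U^2 = I + m \<otimes> c + c \<otimes> m with
  c = b + |b|^2/2 m. The vector w = m \<times> c is fixed by U^2, hence by U, and CC3 says
  |w|^2 \<ge> |a_II|^2 |n_II|^2 / 4 > 0. If e were orthogonal to w, the half-turn about e \<times> w
  would produce the same twin as e; so e \<bullet> w \<noteq> 0, and CC2, which reads
  (w \<bullet> n_II)(w \<bullet> e) = 0, gives w \<bullet> n_II = 0, i.e. |U e| = 1. Then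
  n_II = -2 (c \<bullet> e) m - 2 (m \<bullet> e) c with (m \<bullet> e)(c \<bullet> e) = 0, so n_II is parallel to m
  or to c. Writing U^2 = I + p \<otimes> q + q \<otimes> p with n_II parallel to q, there is a rotation Q
  with Q U = I + d \<otimes> q, and then also Q (U + a_II \<otimes> n_II) = I + u \<otimes> q. By uniqueness of
  the two solutions, Q is one of the R_0 and one of the R_1, with normals parallel to q.
*)

unbundle cross3_syntax

lemmas tens_simps = vec_eq_iff forall_3 sum_3 inner_vec_def matrix_matrix_mult_def
  matrix_vector_mult_def tens_def transpose_def mat_def

section \<open>Dyadic products\<close>

lemma tens_mult_vec: "tens a b *v x = (b \<bullet> x) *\<^sub>R a"
  by (simp add: tens_simps algebra_simps)

lemma matrix_mult_tens: "M ** tens a b = tens (M *v a) b"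
  by (simp add: tens_simps algebra_simps)

lemma transpose_tens: "transpose (tens a b) = tens b a"
  by (simp add: tens_simps)

lemma tens_add_left: "tens (a + a') b = tens a b + tens a' b"
  and tens_scaleR_left: "tens (k *\<^sub>R a) b = k *\<^sub>R tens a b"
  and tens_scaleR_right: "tens a (k *\<^sub>R b) = k *\<^sub>R tens a b"
  by (simp_all add: tens_simps algebra_simps)

lemma tens_zero_left [simp]: "tens 0 b = 0"
  by (simp add: tens_simps)

lemma id_plus_tens_mult:
  "(mat 1 + tens a b) ** (mat 1 + tens c d) = mat 1 + tens a b + tens c d + (b \<bullet> c) *\<^sub>R tens a d"
  by (simp add: tens_simps algebra_simps)

lemma det_id_plus_tens: "det (mat 1 + tens a b) = 1 + a \<bullet> b"
  by (simp add: det_3 tens_simps algebra_simps)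

lemma det_id_plus_sym_tens:
  "det (mat 1 + tens m c + tens c m) = (1 + m \<bullet> c)\<^sup>2 - (m \<bullet> m) * (c \<bullet> c)"
  by (simp add: det_3 tens_simps power2_eq_square algebra_simps)

lemma trace_minus_det_id_plus_sym_tens:
  "trace (mat 1 + tens m c + tens c m) - det (mat 1 + tens m c + tens c m) - 2 = (norm (m \<times> c))\<^sup>2"
proof -
  have "trace (mat 1 + tens m c + tens c m) = 3 + 2 * (m \<bullet> c)"
    by (simp add: trace_def tens_simps)
  moreover have "(norm (m \<times> c))\<^sup>2 = (m \<bullet> m) * (c \<bullet> c) - (m \<bullet> c)\<^sup>2"
    using norm_cross_dot[of m c] by (simp add: power_mult_distrib power2_norm_eq_inner)
  ultimately show ?thesis
    unfolding det_id_plus_sym_tens by (simp add: power2_eq_square algebra_simps)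
qed

lemma cof_sym_tens: "cof (tens m c + tens c m) = - tens (m \<times> c) (m \<times> c)"
proof -
  have idx: "(1::3) + 1 = 2" "(1::3) + 2 = 3" "(2::3) + 1 = 3" "(2::3) + 2 = 1"
    "(3::3) + 1 = 1" "(3::3) + 2 = 2" "(4::3) = 1" "(5::3) = 2"
    by simp_all
  show ?thesis
    by (simp add: cof_def tens_simps cross_components idx algebra_simps)
qed

lemma tens_cross_self:
  "tens (x \<times> y) (x \<times> y) = ((x \<bullet> x) * (y \<bullet> y) - (x \<bullet> y)\<^sup>2) *\<^sub>R mat 1
     - (y \<bullet> y) *\<^sub>R tens x x - (x \<bullet> x) *\<^sub>R tens y y + (x \<bullet> y) *\<^sub>R (tens x y + tens y x)"
  by (simp add: tens_simps cross_components power2_eq_square algebra_simps)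

lemma tens_eq_imp_parallel:
  assumes "tens a b = tens c d" "a \<noteq> 0" "b \<noteq> 0"
  obtains t where "t \<noteq> 0" "d = t *\<^sub>R b"
proof -
  have "transpose (tens a b) *v a = transpose (tens c d) *v a"
    using assms(1) by simp
  then have eq: "(a \<bullet> a) *\<^sub>R b = (c \<bullet> a) *\<^sub>R d"
    by (simp only: transpose_tens tens_mult_vec)
  then have "c \<bullet> a \<noteq> 0"
    using assms(2,3) by auto
  then have "d = (1 / (c \<bullet> a)) *\<^sub>R ((c \<bullet> a) *\<^sub>R d)"
    by simp
  also have "\<dots> = (1 / (c \<bullet> a)) *\<^sub>R ((a \<bullet> a) *\<^sub>R b)"
    by (simp only: eq)
  also have "\<dots> = ((a \<bullet> a) / (c \<bullet> a)) *\<^sub>R b"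
    by simp
  finally have "d = ((a \<bullet> a) / (c \<bullet> a)) *\<^sub>R b" .
  moreover have "(a \<bullet> a) / (c \<bullet> a) \<noteq> 0"
    using assms(2) \<open>c \<bullet> a \<noteq> 0\<close> by simp
  ultimately show ?thesis
    using that by blast
qed

section \<open>Half-turns\<close>

lemma transpose_rot180: "transpose (rot180 e) = rot180 e"
  by (simp add: rot180_def tens_simps)

lemma rot180_minus: "rot180 (- e) = rot180 e"
  by (simp add: rot180_def tens_simps)

lemma rot180_mult:
  "rot180 x ** rot180 y = mat 1 - 2 *\<^sub>R tens x x - 2 *\<^sub>R tens y y + (4 * (x \<bullet> y)) *\<^sub>R tens x y"
  by (simp add: rot180_def tens_simps algebra_simps)

lemma rot180_conj:
  "rot180 w ** U ** rot180 w
     = U - 2 *\<^sub>R tens (U *v w) w - 2 *\<^sub>R tens w (transpose U *v w) + (4 * (w \<bullet> (U *v w))) *\<^sub>R tens w w"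
  by (simp add: rot180_def tens_simps algebra_simps)

lemma rot180_involutive:
  assumes "norm e = 1"
  shows "rot180 e ** rot180 e = mat 1"
proof -
  have "e \<bullet> e = 1"
    using assms by (simp add: norm_eq_1)
  then show ?thesis
    unfolding rot180_mult by (simp add: tens_simps algebra_simps)
qed

lemma rot180_mult_orthonormal:
  assumes "x \<bullet> x = 1" "y \<bullet> y = 1" "x \<bullet> y = 0"
  shows "rot180 x ** rot180 y = rot180 (x \<times> y)"
proof -
  have "tens (x \<times> y) (x \<times> y) = mat 1 - tens x x - tens y y"
    using tens_cross_self[of x y] assms by simp
  then have "rot180 (x \<times> y) = - mat 1 + 2 *\<^sub>R (mat 1 - tens x x - tens y y)"
    by (simp add: rot180_def)
  also have "\<dots> = mat 1 - 2 *\<^sub>R tens x x - 2 *\<^sub>R tens y y"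
    by (simp add: vec_eq_iff mat_def algebra_simps)
  also have "\<dots> = rot180 x ** rot180 y"
    using assms by (simp add: rot180_mult)
  finally show ?thesis
    by simp
qed

lemma rot180_conj_fixed_axis:
  assumes "transpose U = U" "U *v u = u" "u \<bullet> u = 1"
  shows "rot180 u ** U ** rot180 u = U"
  unfolding rot180_conj assms by (simp add: tens_simps algebra_simps)

text \<open>If U fixes a unit vector u orthogonal to e, the half-turn about e \<times> u is the half-turn
  about e composed with one that commutes with U.\<close>
lemma rot180_conj_other_axis:
  assumes U: "transpose U = U" and e: "norm e = 1" and Uw: "U *v w = w" and "w \<noteq> 0"
    and ew: "e \<bullet> w = 0"
  obtains e' where "norm e' = 1" "rot180 e' ** U ** rot180 e' = rot180 e ** U ** rot180 e"
    "e' \<noteq> e" "e' \<noteq> - e"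
proof -
  define u where "u = (1 / norm w) *\<^sub>R w"
  have nu: "norm u = 1"
    using \<open>w \<noteq> 0\<close> by (simp add: u_def)
  then have uu: "u \<bullet> u = 1"
    by (simp add: norm_eq_1)
  have ee: "e \<bullet> e = 1"
    using e by (simp add: norm_eq_1)
  have eu: "e \<bullet> u = 0" "u \<bullet> e = 0"
    using ew by (simp_all add: u_def inner_commute)
  have Uu: "U *v u = u"
    using Uw by (simp add: u_def matrix_vector_mult_scaleR)
  have "rot180 e ** rot180 u = rot180 (e \<times> u)"
    using rot180_mult_orthonormal[OF ee uu eu(1)] .
  moreover have "rot180 u ** rot180 e = rot180 (e \<times> u)"
    using rot180_mult_orthonormal[OF uu ee eu(2)] by (simp add: cross_skew[of u e] rot180_minus)
  ultimately have "rot180 (e \<times> u) ** U ** rot180 (e \<times> u)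
      = rot180 e ** (rot180 u ** U ** rot180 u) ** rot180 e"
    by (metis matrix_mul_assoc)
  also have "\<dots> = rot180 e ** U ** rot180 e"
    by (simp add: rot180_conj_fixed_axis[OF U Uu uu])
  finally have conj: "rot180 (e \<times> u) ** U ** rot180 (e \<times> u) = rot180 e ** U ** rot180 e" .
  have "norm (e \<times> u) = 1"
    using norm_cross_dot[of e u] e nu eu norm_ge_zero[of "e \<times> u"] by (auto simp: power2_eq_1_iff)
  moreover have "e \<bullet> (e \<times> u) = 0"
    by (simp add: dot_cross_self)
  ultimately show ?thesis
    using that conj ee by force
qed

section \<open>Symmetric positive-definite matrices\<close>

lemma inner_sym_matrix:
  fixes U :: "real^'n^'n"
  assumes "transpose U = U"
  shows "(U *v x) \<bullet> y = x \<bullet> (U *v y)"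
proof -
  have "(U *v x) = x v* U"
    using assms transpose_matrix_vector[of U x] by simp
  then show ?thesis
    by (simp add: dot_lmul_matrix)
qed

lemma neg_mult_vec: "(- A) *v x = - (A *v x)" for A :: "real^'n^'m"
  by (simp add: matrix_vector_mult_def vec_eq_iff sum_negf)

lemma sym_pos_fixed_of_square_fixed:
  assumes U: "sym_pos_def U" and w: "U *v (U *v w) = w"
  shows "U *v w = w"
proof (rule ccontr)
  define v where "v = U *v w - w"
  assume "U *v w \<noteq> w"
  then have "v \<bullet> (U *v v) > 0"
    using U by (simp add: sym_pos_def_def v_def)
  moreover have "U *v v = - v"
    using w by (simp add: v_def matrix_vector_mult_diff_distrib)
  ultimately show False
    by (simp add: inner_ge_zero leD)
qed

lemma sym_pos_square_eq_id:
  assumes U: "sym_pos_def U" and "U ** U = mat 1"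
  shows "U = mat 1"
  using sym_pos_fixed_of_square_fixed[OF U] assms(2)
  by (simp add: matrix_eq matrix_vector_mul_assoc)

lemma sym_pos_eq_id_of_orthogonal_inverse:
  assumes U: "sym_pos_def U" and Q: "orthogonal_matrix Q" and QU: "Q ** U = mat 1"
  shows "U = mat 1"
proof -
  have QtQ: "transpose Q ** Q = mat 1"
    using Q by (simp add: orthogonal_matrix_def)
  have "U = transpose Q ** (Q ** U)"
    using QtQ by (simp add: matrix_mul_assoc)
  then have "transpose Q = U"
    using QU by simp
  then have "Q = U"
    using U unfolding sym_pos_def_def by (metis transpose_transpose)
  then have "U ** U = mat 1"
    using QtQ \<open>transpose Q = U\<close> by simp
  then show ?thesis
    using sym_pos_square_eq_id[OF U] by simp
qed

lemma sym_pos_det_nonzero: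
  assumes "sym_pos_def U"
  shows "det U \<noteq> 0"
proof
  assume "det U = 0"
  then have "\<not> inj ((*v) U)"
    using invertible_det_nz invertible_left_inverse matrix_left_invertible_injective by blast
  then obtain x y where "U *v x = U *v y" "x \<noteq> y"
    unfolding inj_def by blast
  then have "U *v (x - y) = 0" "x - y \<noteq> 0"
    by (simp_all add: matrix_vector_mult_diff_distrib)
  then show False
    using assms unfolding sym_pos_def_def by (metis inner_zero_right order_less_irrefl)
qed

lemma sym_pos_rot180_conj:
  assumes e: "norm e = 1" and U: "sym_pos_def U"
  shows "sym_pos_def (rot180 e ** U ** rot180 e)"
  unfolding sym_pos_def_def
proof (intro conjI allI impI)
  show "transpose (rot180 e ** U ** rot180 e) = rot180 e ** U ** rot180 e"
    using U by (simp add: sym_pos_def_def matrix_transpose_mul transpose_rot180 matrix_mul_assoc)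
next
  fix x :: "real^3"
  assume "x \<noteq> 0"
  moreover have "rot180 e *v (rot180 e *v x) = x"
    by (simp add: matrix_vector_mul_assoc rot180_involutive[OF e])
  ultimately have "rot180 e *v x \<noteq> 0"
    by auto
  then have "(rot180 e *v x) \<bullet> (U *v (rot180 e *v x)) > 0"
    using U by (simp add: sym_pos_def_def)
  also have "(rot180 e *v x) \<bullet> (U *v (rot180 e *v x)) = x \<bullet> ((rot180 e ** U ** rot180 e) *v x)"
    by (metis dot_lmul_matrix transpose_matrix_vector transpose_rot180 matrix_vector_mul_assoc)
  finally show "x \<bullet> ((rot180 e ** U ** rot180 e) *v x) > 0" .
qed

section \<open>Rank-one connections to the identity\<close>

lemma square_of_rank_one_connection:
  assumes U: "transpose U = U" and R: "orthogonal_matrix R" and RU: "R ** U = mat 1 + tens b m"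
  defines "c \<equiv> b + ((b \<bullet> b) / 2) *\<^sub>R m"
  shows "U ** U = mat 1 + tens m c + tens c m"
proof -
  have "U ** U = transpose U ** (transpose R ** R) ** U"
    using U R by (simp add: orthogonal_matrix_def)
  also have "\<dots> = transpose (R ** U) ** (R ** U)"
    by (simp add: matrix_transpose_mul matrix_mul_assoc)
  also have "\<dots> = (mat 1 + tens m b) ** (mat 1 + tens b m)"
    unfolding RU by (simp add: transpose_tens tens_simps)
  also have "\<dots> = mat 1 + tens m c + tens c m"
    unfolding id_plus_tens_mult c_def by (simp add: tens_simps algebra_simps)
  finally show ?thesis .
qed

text \<open>d = p - l q is chosen so that (I + q \<otimes> d)(I + d \<otimes> q) = U^2 and 1 + d \<bullet> q = det U.\<close>
lemma rank_one_connection_of_square: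
  assumes U: "transpose U = U" and dU: "det U \<noteq> 0"
    and sq: "U ** U = mat 1 + tens p q + tens q p" and q: "q \<noteq> 0"
  obtains R d where "R \<in> SO3" "R ** U = mat 1 + tens d q"
proof -
  define l where "l = (1 + p \<bullet> q - det U) / (q \<bullet> q)"
  define d where "d = p - l *\<^sub>R q"
  have qq: "q \<bullet> q \<noteq> 0"
    using q by simp
  have lq: "l * (q \<bullet> q) = 1 + p \<bullet> q - det U"
    using qq by (simp add: l_def)
  have det_sq: "(1 + p \<bullet> q)\<^sup>2 - (p \<bullet> p) * (q \<bullet> q) = (det U)\<^sup>2"
    using arg_cong[OF sq, of det] by (simp add: det_mul det_id_plus_sym_tens power2_eq_square)
  have dq: "1 + d \<bullet> q = det U"
    using lq by (simp add: d_def inner_diff_left algebra_simps)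
  have "(q \<bullet> q) * (d \<bullet> d) = (q \<bullet> q) * (p \<bullet> p) - 2 * (p \<bullet> q) * (l * (q \<bullet> q)) + (l * (q \<bullet> q))\<^sup>2"
    by (simp add: d_def inner_diff_left inner_diff_right inner_commute power2_eq_square algebra_simps)
  also have "\<dots> = (q \<bullet> q) * (2 * l)"
    unfolding lq using det_sq lq by algebra
  finally have dd: "d \<bullet> d = 2 * l"
    using qq by simp
  obtain B where B: "B ** U = mat 1"
    using dU invertible_det_nz invertible_left_inverse by blast
  then have UB: "U ** B = mat 1"
    using matrix_left_right_inverse by blast
  define R where "R = (mat 1 + tens d q) ** B"
  have RU: "R ** U = mat 1 + tens d q"
    by (simp add: R_def B flip: matrix_mul_assoc)
  have "transpose (mat 1 + tens d q) ** (mat 1 + tens d q) = mat 1 + tens q d + tens d q + (d \<bullet> d) *\<^sub>R tens q q"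
    by (simp add: transpose_tens tens_simps algebra_simps)
  also have "\<dots> = U ** U"
    unfolding sq dd by (simp add: d_def tens_simps algebra_simps)
  finally have M: "transpose (mat 1 + tens d q) ** (mat 1 + tens d q) = U ** U" .
  have "transpose R ** R = transpose B ** (transpose (mat 1 + tens d q) ** (mat 1 + tens d q)) ** B"
    by (simp add: R_def matrix_transpose_mul matrix_mul_assoc)
  also have "\<dots> = transpose (transpose U ** B) ** (U ** B)"
    unfolding M by (simp add: matrix_transpose_mul matrix_mul_assoc)
  also have "\<dots> = mat 1"
    using UB U by simp
  finally have "orthogonal_matrix R"
    by (simp add: orthogonal_matrix)
  moreover have "det R = 1"
    using arg_cong[OF B, of det] dq by (simp add: R_def det_mul det_id_plus_tens inner_commute mult.commute)
  ultimately show ?thesis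
    using that RU by (simp add: SO3_def)
qed

lemma rank_one_connection_nontrivial:
  assumes "orthogonal_matrix Q" "sym_pos_def V" "V \<noteq> mat 1" "Q ** V = mat 1 + tens d q"
  shows "d \<noteq> 0"
  using assms sym_pos_eq_id_of_orthogonal_inverse by force

lemma rank_one_interpolation:
  fixes R U T :: "real^3^3"
  assumes "R ** U = mat 1 + tens b0 m" "R ** (U + T) = mat 1 + tens b1 m"
  shows "R ** (U + f *\<^sub>R T) = mat 1 + tens (f *\<^sub>R b1 + (1 - f) *\<^sub>R b0) m"
proof -
  have RT: "R ** T = tens b1 m - tens b0 m"
    using assms by (simp add: matrix_add_ldistrib algebra_simps)
  have "R ** (U + f *\<^sub>R T) = R ** U + f *\<^sub>R (R ** T)"
    by (simp add: tens_simps algebra_simps)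
  also have "\<dots> = mat 1 + tens b0 m + f *\<^sub>R (tens b1 m - tens b0 m)"
    by (simp only: assms(1) RT)
  also have "\<dots> = mat 1 + tens (f *\<^sub>R b1 + (1 - f) *\<^sub>R b0) m"
    by (simp add: tens_simps algebra_simps)
  finally show ?thesis .
qed

lemma rank_one_connections_common_normal:
  assumes U: "sym_pos_def U" and e: "norm e = 1" and twin: "rot180 e ** U ** rot180 e \<noteq> U"
    and Rhat: "Rhat \<in> SO3" "Rhat ** (rot180 e ** U ** rot180 e) = U + tens a n"
    and sq: "U ** U = mat 1 + tens p q + tens q p" and "q \<noteq> 0" and n: "n = k *\<^sub>R q"
  obtains Q d u where "Q \<in> SO3" "Q ** U = mat 1 + tens d q" "Q ** (U + tens a n) = mat 1 + tens u q"
    "d \<noteq> 0" "u \<noteq> 0"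
proof -
  have Ut: "transpose U = U"
    using U by (simp add: sym_pos_def_def)
  obtain Q d where Q: "Q \<in> SO3" "Q ** U = mat 1 + tens d q"
    using rank_one_connection_of_square[OF Ut sym_pos_det_nonzero[OF U] sq \<open>q \<noteq> 0\<close>] .
  define u where "u = d + k *\<^sub>R (Q *v a)"
  have "Q ** (U + tens a n) = mat 1 + tens d q + tens (Q *v a) (k *\<^sub>R q)"
    by (simp add: matrix_add_ldistrib Q(2) matrix_mult_tens n)
  also have "\<dots> = mat 1 + tens u q"
    by (simp add: u_def tens_add_left tens_scaleR_left tens_scaleR_right)
  finally have QV: "Q ** (U + tens a n) = mat 1 + tens u q" .
  have oQ: "orthogonal_matrix Q"
    using Q(1) by (simp add: SO3_def)
  have rr: "rot180 e ** rot180 e = mat 1" "X ** rot180 e ** rot180 e = X" for X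
    using rot180_involutive[OF e] by (simp_all flip: matrix_mul_assoc)
  have "U \<noteq> mat 1"
    using twin by (auto simp: rr)
  moreover have "U = rot180 e ** (rot180 e ** U ** rot180 e) ** rot180 e"
    by (simp add: matrix_mul_assoc rr)
  ultimately have twin_ne_id: "rot180 e ** U ** rot180 e \<noteq> mat 1"
    by (auto simp: rr)
  have "(Q ** Rhat) ** (rot180 e ** U ** rot180 e) = Q ** (Rhat ** (rot180 e ** U ** rot180 e))"
    by (rule matrix_mul_assoc[symmetric])
  also have "\<dots> = mat 1 + tens u q"
    using Rhat(2) QV by simp
  finally have "(Q ** Rhat) ** (rot180 e ** U ** rot180 e) = mat 1 + tens u q" .
  moreover have "orthogonal_matrix (Q ** Rhat)"
    using oQ Rhat(1) by (simp add: SO3_def orthogonal_matrix_mul)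
  ultimately have "u \<noteq> 0"
    using rank_one_connection_nontrivial sym_pos_rot180_conj[OF e U] twin_ne_id by blast
  moreover have "d \<noteq> 0"
    using rank_one_connection_nontrivial[OF oQ U \<open>U \<noteq> mat 1\<close> Q(2)] .
  ultimately show ?thesis
    using that Q QV by blast
qed

section \<open>The twin normal\<close>

definition twin_normal :: "real^3^3 \<Rightarrow> real^3 \<Rightarrow> real^3" where
  "twin_normal U e = 2 *\<^sub>R (e - (1 / (norm (U *v e))\<^sup>2) *\<^sub>R ((U ** U) *v e))"

lemma sym_pos_fixes_cross:
  assumes U: "sym_pos_def U" and sq: "U ** U = mat 1 + tens m c + tens c m"
  shows "U *v (m \<times> c) = m \<times> c"
proof -
  have "U *v (U *v (m \<times> c)) = m \<times> c"
    by (simp add: matrix_vector_mul_assoc sq matrix_vector_mult_add_rdistrib tens_mult_vec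
        dot_cross_self)
  then show ?thesis
    by (rule sym_pos_fixed_of_square_fixed[OF U])
qed

lemma cofactor_condition_sym_tens:
  assumes U: "transpose U = U" and sq: "U ** U = mat 1 + tens m c + tens c m"
    and fixed: "U *v (m \<times> c) = m \<times> c"
  shows "(U *v e) \<bullet> ((U ** cof (U ** U - mat 1)) *v n) = - (((m \<times> c) \<bullet> n) * ((m \<times> c) \<bullet> e))"
proof -
  have "U ** U - mat 1 = tens m c + tens c m"
    unfolding sq by simp
  then have "U ** cof (U ** U - mat 1) = U ** (- tens (m \<times> c) (m \<times> c))"
    by (simp only: cof_sym_tens)
  also have "\<dots> = - (U ** tens (m \<times> c) (m \<times> c))"
    by (simp add: matrix_matrix_mult_def vec_eq_iff sum_negf)
  also have "\<dots> = - tens (m \<times> c) (m \<times> c)"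
    by (simp add: matrix_mult_tens fixed)
  finally have "U ** cof (U ** U - mat 1) = - tens (m \<times> c) (m \<times> c)" .
  moreover have "(U *v e) \<bullet> (m \<times> c) = e \<bullet> (m \<times> c)"
    by (simp add: inner_sym_matrix[OF U] fixed)
  ultimately show ?thesis
    by (simp add: neg_mult_vec tens_mult_vec inner_commute)
qed

lemma inner_twin_normal_fixed:
  assumes U: "transpose U = U" and fixed: "U *v w = w"
  shows "w \<bullet> twin_normal U e = 2 * (e \<bullet> w) * (1 - 1 / (norm (U *v e))\<^sup>2)"
proof -
  have "w \<bullet> ((U ** U) *v e) = (U *v w) \<bullet> (U *v e)"
    by (simp add: inner_sym_matrix[OF U] matrix_vector_mul_assoc)
  also have "\<dots> = w \<bullet> (U *v e)"
    by (simp only: fixed)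
  also have "\<dots> = e \<bullet> w"
    by (simp add: inner_sym_matrix[OF U, symmetric] fixed inner_commute)
  finally show ?thesis
    by (simp add: twin_normal_def inner_diff_right inner_commute algebra_simps)
qed

lemma twin_normal_of_unit_stretch:
  assumes U: "transpose U = U" and sq: "U ** U = mat 1 + tens m c + tens c m"
    and e: "e \<bullet> e = 1" and Ue: "norm (U *v e) = 1"
  shows "(m \<bullet> e) * (c \<bullet> e) = 0"
    and "twin_normal U e = (-2 * (c \<bullet> e)) *\<^sub>R m + (-2 * (m \<bullet> e)) *\<^sub>R c"
proof -
  have U2e: "(U ** U) *v e = e + (c \<bullet> e) *\<^sub>R m + (m \<bullet> e) *\<^sub>R c"
    by (simp add: sq matrix_vector_mult_add_rdistrib tens_mult_vec)
  have "1 = (U *v e) \<bullet> (U *v e)"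
    using Ue by (simp add: norm_eq_1)
  also have "\<dots> = e \<bullet> ((U ** U) *v e)"
    by (simp add: inner_sym_matrix[OF U] matrix_vector_mul_assoc)
  also have "\<dots> = 1 + 2 * (m \<bullet> e) * (c \<bullet> e)"
    unfolding U2e using e by (simp add: inner_add_right inner_commute algebra_simps)
  finally show "(m \<bullet> e) * (c \<bullet> e) = 0"
    by simp
  show "twin_normal U e = (-2 * (c \<bullet> e)) *\<^sub>R m + (-2 * (m \<bullet> e)) *\<^sub>R c"
    unfolding twin_normal_def Ue U2e by (simp add: algebra_simps)
qed

lemma twin_normal_rank_one:
  assumes U: "sym_pos_def U" and e: "norm e = 1"
    and unique: "\<forall>e'. norm e' = 1 \<and> rot180 e' ** U ** rot180 e' = rot180 e ** U ** rot180 e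
                   \<longrightarrow> e' = e \<or> e' = - e"
    and sq: "U ** U = mat 1 + tens m c + tens c m"
    and n_nz: "twin_normal U e \<noteq> 0"
    and CC2: "(U *v e) \<bullet> ((U ** cof (U ** U - mat 1)) *v twin_normal U e) = 0"
    and CC3: "trace (U ** U) - det (U ** U) - (norm (U *v e))\<^sup>2 * (norm (twin_normal U e))\<^sup>2 / 4 - 2 \<ge> 0"
  obtains p q k where "U ** U = mat 1 + tens p q + tens q p" "q \<noteq> 0" "k \<noteq> 0"
    "twin_normal U e = k *\<^sub>R q"
proof -
  define w where "w = m \<times> c"
  have Ut: "transpose U = U"
    using U by (simp add: sym_pos_def_def)
  have "e \<noteq> 0"
    using e by auto
  then have "e \<bullet> (U *v e) > 0"
    using U by (simp add: sym_pos_def_def)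
  then have "U *v e \<noteq> 0"
    by auto
  then have "(norm (U *v e))\<^sup>2 * (norm (twin_normal U e))\<^sup>2 / 4 > 0"
    using n_nz by simp
  moreover have "(norm w)\<^sup>2 \<ge> (norm (U *v e))\<^sup>2 * (norm (twin_normal U e))\<^sup>2 / 4"
    using CC3 trace_minus_det_id_plus_sym_tens[of m c] by (simp add: sq w_def)
  ultimately have "w \<noteq> 0"
    by auto
  have Uw: "U *v w = w"
    unfolding w_def using sym_pos_fixes_cross[OF U sq] .
  have ew: "e \<bullet> w \<noteq> 0"
  proof
    assume "e \<bullet> w = 0"
    then obtain e' where "norm e' = 1" "rot180 e' ** U ** rot180 e' = rot180 e ** U ** rot180 e"
      "e' \<noteq> e" "e' \<noteq> - e"
      using rot180_conj_other_axis[OF Ut e Uw \<open>w \<noteq> 0\<close>] by blast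
    then show False
      using unique by blast
  qed
  have "w \<bullet> twin_normal U e = 0"
    using CC2 ew cofactor_condition_sym_tens[OF Ut sq Uw[unfolded w_def]]
    by (simp add: w_def inner_commute)
  then have "1 - 1 / (norm (U *v e))\<^sup>2 = 0"
    using ew inner_twin_normal_fixed[OF Ut Uw] by simp
  then have "(norm (U *v e))\<^sup>2 = 1"
    by (cases "(norm (U *v e))\<^sup>2 = 0") (auto simp: field_simps)
  then have Ue: "norm (U *v e) = 1"
    using norm_ge_zero[of "U *v e"] by (auto simp: power2_eq_1_iff)
  have ee: "e \<bullet> e = 1"
    using e by (simp add: norm_eq_1)
  note stretch = twin_normal_of_unit_stretch[OF Ut sq ee Ue]
  show ?thesis
  proof (cases "m \<bullet> e = 0")
    case True
    then show ?thesis
      using that[of c m "-2 * (c \<bullet> e)"] stretch(2) sq n_nz by (auto simp: algebra_simps)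
  next
    case False
    then have "c \<bullet> e = 0"
      using stretch(1) by simp
    then show ?thesis
      using that[of m c "-2 * (m \<bullet> e)"] stretch(2) sq n_nz by auto
  qed
qed

theorem theorem3:
  fixes U :: "real^3^3" and e :: "real^3" and Rhat :: "real^3^3"
    and R :: "nat \<Rightarrow> int \<Rightarrow> real^3^3" and b m :: "nat \<Rightarrow> int \<Rightarrow> real^3"
  defines "Uhat \<equiv> rot180 e ** U ** rot180 e"
  defines "nII \<equiv> 2 *\<^sub>R (e - (1 / (norm (U *v e))\<^sup>2) *\<^sub>R ((U ** U) *v e))"
  defines "aII \<equiv> U *v e"
  assumes U: "sym_pos_def U"
    and e_unit: "norm e = 1"
    and twin: "Uhat \<noteq> U"
    and e_unique: "\<forall>e'. norm e' = 1 \<and> rot180 e' ** U ** rot180 e' = Uhat \<longrightarrow> e' = e \<or> e' = - e"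
    and Rhat: "Rhat \<in> SO3" "Rhat ** Uhat = U + tens aII nII"
    and nII_nz: "nII \<noteq> 0"
    and CC1: "middle_eigenvalue U = 1"
    and CC2: "aII \<bullet> ((U ** cof (U ** U - mat 1)) *v nII) = 0"
    and CC3: "trace (U ** U) - det (U ** U) - (norm aII)\<^sup>2 * (norm nII)\<^sup>2 / 4 - 2 \<ge> 0"
    and sols: "\<forall>f\<in>{0,1}. \<forall>\<kappa>\<in>{1,-1}.
                 R f \<kappa> \<in> SO3 \<and> R f \<kappa> ** (U + real f *\<^sub>R tens aII nII) = mat 1 + tens (b f \<kappa>) (m f \<kappa>)"
    and distinct: "\<forall>f\<in>{0,1}. (R f 1, tens (b f 1) (m f 1)) \<noteq> (R f (-1), tens (b f (-1)) (m f (-1)))"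
    and all_sols: "\<forall>f\<in>{0,1}. \<forall>Q c d. Q \<in> SO3 \<and> Q ** (U + real f *\<^sub>R tens aII nII) = mat 1 + tens c d
                     \<longrightarrow> (\<exists>\<kappa>\<in>{1,-1}. Q = R f \<kappa> \<and> tens c d = tens (b f \<kappa>) (m f \<kappa>))"
  shows "\<exists>\<sigma>\<in>{1,-1}. \<exists>\<sigma>s\<in>{1,-1}. \<exists>\<xi>. \<xi> \<noteq> 0 \<and>
           R 1 \<sigma>s = R 0 \<sigma> \<and> m 1 \<sigma>s = \<xi> *\<^sub>R m 0 \<sigma> \<and>
           R 0 \<sigma> ** U = mat 1 + tens (b 0 \<sigma>) (m 0 \<sigma>) \<and>
           R 0 \<sigma> ** (U + tens aII nII) = mat 1 + tens (\<xi> *\<^sub>R b 1 \<sigma>s) (m 0 \<sigma>) \<and>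
           (\<forall>f::real. 0 \<le> f \<and> f \<le> 1 \<longrightarrow>
              R 0 \<sigma> ** (U + f *\<^sub>R tens aII nII)
                = mat 1 + tens ((f * \<xi>) *\<^sub>R b 1 \<sigma>s + (1 - f) *\<^sub>R b 0 \<sigma>) (m 0 \<sigma>)) \<and>
           (\<exists>c. c \<noteq> 0 \<and> nII = c *\<^sub>R m 0 \<sigma>)"
proof -
  have Ut: "transpose U = U"
    using U by (simp add: sym_pos_def_def)
  have nII_eq: "nII = twin_normal U e"
    by (simp add: nII_def twin_normal_def)
  have "R 0 1 \<in> SO3" "R 0 1 ** U = mat 1 + tens (b 0 1) (m 0 1)"
    using sols by auto
  then obtain m0 c where sq: "U ** U = mat 1 + tens m0 c + tens c m0"
    using square_of_rank_one_connection[OF Ut] by (auto simp: SO3_def)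
  obtain p q k where pq: "U ** U = mat 1 + tens p q + tens q p" "q \<noteq> 0" "k \<noteq> 0" "nII = k *\<^sub>R q"
    using twin_normal_rank_one[OF U e_unit e_unique[unfolded Uhat_def] sq]
      nII_nz CC2 CC3 unfolding aII_def nII_eq by blast
  obtain Q d u where Q: "Q \<in> SO3" "Q ** U = mat 1 + tens d q"
    "Q ** (U + tens aII nII) = mat 1 + tens u q" "d \<noteq> 0" "u \<noteq> 0"
    using rank_one_connections_common_normal[OF U e_unit twin[unfolded Uhat_def]
        Rhat[unfolded Uhat_def] pq(1,2,4)] .
  have match: "\<exists>\<kappa>\<in>{1,-1}. \<exists>t. t \<noteq> 0 \<and> R f \<kappa> = Q \<and> m f \<kappa> = t *\<^sub>R q"
    if "f \<in> {0,1}" "Q ** (U + real f *\<^sub>R tens aII nII) = mat 1 + tens d' q" "d' \<noteq> 0" for f d'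
    using all_sols that Q(1) tens_eq_imp_parallel[OF _ \<open>d' \<noteq> 0\<close> pq(2)] by metis
  obtain \<sigma> t0 where \<sigma>: "\<sigma> \<in> {1,-1}" "t0 \<noteq> 0" "R 0 \<sigma> = Q" "m 0 \<sigma> = t0 *\<^sub>R q"
    using match[of 0 d] Q(2,4) by auto
  obtain \<sigma>s t1 where \<sigma>s: "\<sigma>s \<in> {1,-1}" "t1 \<noteq> 0" "R 1 \<sigma>s = Q" "m 1 \<sigma>s = t1 *\<^sub>R q"
    using match[of 1 u] Q(3,5) by auto
  define \<xi> where "\<xi> = t1 / t0"
  have E0: "R 0 \<sigma> ** U = mat 1 + tens (b 0 \<sigma>) (m 0 \<sigma>)"
    using sols \<sigma>(1) by auto
  have "R 0 \<sigma> ** (U + tens aII nII) = mat 1 + tens (b 1 \<sigma>s) (m 1 \<sigma>s)"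
    using sols \<sigma>s(1,3) \<sigma>(3) by auto
  then have E1: "R 0 \<sigma> ** (U + tens aII nII) = mat 1 + tens (\<xi> *\<^sub>R b 1 \<sigma>s) (m 0 \<sigma>)"
    using \<sigma>(2,4) \<sigma>s(4) by (simp add: \<xi>_def tens_scaleR_left tens_scaleR_right)
  have "R 0 \<sigma> ** (U + f *\<^sub>R tens aII nII)
      = mat 1 + tens ((f * \<xi>) *\<^sub>R b 1 \<sigma>s + (1 - f) *\<^sub>R b 0 \<sigma>) (m 0 \<sigma>)" for f
    using rank_one_interpolation[OF E0 E1, of f] by simp
  moreover have "\<xi> \<noteq> 0" "R 1 \<sigma>s = R 0 \<sigma>" "m 1 \<sigma>s = \<xi> *\<^sub>R m 0 \<sigma>"
    using \<sigma> \<sigma>s by (simp_all add: \<xi>_def)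
  moreover have "k / t0 \<noteq> 0" "nII = (k / t0) *\<^sub>R m 0 \<sigma>"
    using pq(3,4) \<sigma>(2,4) by simp_all
  ultimately show ?thesis
    using \<sigma>(1) \<sigma>s(1) E0 E1 by blast
qed

end
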